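(* Consider subgradient-push as in the setting below. Suppose $\{\mathbb G(t)\}$ is uniformly strongly connected by sub-sequences of length $L$ and $\|g_i(t)\|\le G$ for all $i,t$, for some $G>0$. Let $\eta,\mu$ be constants as described below. Then for all $t\ge0$ and $i\in\mathcal V$, $$\Big\|z_i(t+1)-\frac1n\sum_{k=1}^n\big(x_k(t)-\alpha(t)g_k(t)\big)\Big\|\le\frac8\eta\mu^t\sum_{k=1}^n\|x_k(0)-\alpha(0)g_k(0)\|+\frac{8nG}{\eta}\sum_{s=1}^t\mu^{t-s}\alpha(s).$$ If in addition $\{\alpha(t)\}$ is positive, non-increasing, with $\sum_t\alpha(t)=\infty$ and $\sum_t\alpha^2(t)<\infty$, then for all $t\ge0$ and $i\in\mathcal V$, $$\Big\|z_i(t+1)-\frac1n\sum_{k=1}^n\big(x_k(t)-\alpha(t)g_k(t)\big)\Big\|\le\frac8\eta\mu^t\sum_{k=1}^n\|x_k(0)-\alpha(0)g_k(0)\|+\frac{8nG}{\eta(1-\mu)}\big(\alpha(0)\mu^{t/2}+\alpha(\lceil t/2\rceil)\big).$$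
   Context: Setting. Fix $n$ agents, $\mathcal V=\{1,\dots,n\}$. For each $t\in\{0,1,2,\dots\}$, $\mathbb G(t)=(\mathcal V,\mathcal E(t))$ is a directed graph containing a self-arc $(i,i)$ at every vertex; $\mathcal N_i(t)=\{j:(j,i)\in\mathcal E(t)\}$ and $\mathcal N_i^-(t)=\{k:(i,k)\in\mathcal E(t)\}$. Weights $w_{ij}(t)$ are positive for $j\in\mathcal N_i(t)$ and $w_{ij}(t)=0$ otherwise, and satisfy: there is $\beta>0$ with $w_{ij}(t)\ge\beta$ whenever $j\in\mathcal N_i(t)$, and $\sum_{j\in\mathcal N_i^-(t)}w_{ji}(t)=1$ for all $i,t$. Write $\Phi_W(t,\tau)=W(t-1)\cdots W(\tau)$ for $t>\tau$, where $W(t)=[w_{ij}(t)]$. The sequence $\{\mathbb G(t)\}$ is uniformly strongly connected by sub-sequences of length $L$ if for every $t\ge0$ the directed graph with vertex set $\mathcal V$ and edge set $\bigcup_{k=t}^{t+L-1}\mathcal E(k)$ is strongly connected. Subgradient-push: each agent $i$ has a convex $f_i:\mathbb R^d\to\mathbb R$; with stepsizes $\alpha(t)>0$, $x_i(t+1)=\sum_{j\in\mathcal N_i(t)}w_{ij}(t)[x_j(t)-\alpha(t)g_j(t)]$, $x_i(0)\in\mathbb R^d$; $y_i(t+1)=\sum_{j\in\mathcal N_i(t)}w_{ij}(t)y_j(t)$, $y_i(0)=1$; $z_i(t)=x_i(t)/y_i(t)$; and $g_i(t)$ is a subgradient of $f_i$ at $z_i(t)$. Constants: $\eta>0$ is any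 constant with $y_i(t)\ge\eta$ for all $i,t$ (such exists, e.g. $\eta=n^{-nL}$); $\mu\in(0,1)$ is any constant for which there exist stochastic vectors $\phi(t)\in\mathbb R^n$ with $|[\Phi_W(t+1,s)]_{ij}-\phi_i(t)|\le4\mu^{t-s}$ for all $i,j\in\mathcal V$, $t\ge s\ge0$ (e.g. $\mu=(1-n^{-nL})^{1/L}$). *)

theory Defs
  imports "HOL-Analysis.Analysis"
begin

text \<open>Agents are indexed by the vertex set V = {1..n}. Time-varying data are
functions of the time t first, then of the agent index.\<close>

definition agents :: "nat \<Rightarrow> nat set" where
  "agents n = {1..n}"

definition in_nbrs :: "(nat \<Rightarrow> (nat \<times> nat) set) \<Rightarrow> nat \<Rightarrow> nat \<Rightarrow> nat set" where
  "in_nbrs E t i = {j. (j, i) \<in> E t}"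

definition out_nbrs :: "(nat \<Rightarrow> (nat \<times> nat) set) \<Rightarrow> nat \<Rightarrow> nat \<Rightarrow> nat set" where
  "out_nbrs E t i = {k. (i, k) \<in> E t}"

definition strongly_connected :: "nat set \<Rightarrow> (nat \<times> nat) set \<Rightarrow> bool" where
  "strongly_connected V A \<longleftrightarrow> (\<forall>i\<in>V. \<forall>j\<in>V. (i, j) \<in> (A \<inter> (V \<times> V))\<^sup>*)"

definition uniformly_strongly_connected ::
    "nat set \<Rightarrow> nat \<Rightarrow> (nat \<Rightarrow> (nat \<times> nat) set) \<Rightarrow> bool" where
  "uniformly_strongly_connected V L E \<longleftrightarrow>
     (\<forall>t. strongly_connected V (\<Union>k\<in>{t..<t + L}. E k))"

fun matprod :: "(nat \<Rightarrow> nat \<Rightarrow> nat \<Rightarrow> real) \<Rightarrow> nat set \<Rightarrow> nat \<Rightarrow> nat \<Rightarrow> nat \<Rightarrow> nat \<Rightarrow> real" where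
  "matprod W V s 0 i j = (if i = j then 1 else 0)"
| "matprod W V s (Suc k) i j = (\<Sum>l\<in>V. W (s + k) i l * matprod W V s k l j)"

text \<open>Phi_W(t, s) = W(t-1) \<cdots> W(s)  (used for t > s).\<close>
definition PhiW :: "(nat \<Rightarrow> nat \<Rightarrow> nat \<Rightarrow> real) \<Rightarrow> nat set \<Rightarrow> nat \<Rightarrow> nat \<Rightarrow> nat \<Rightarrow> nat \<Rightarrow> real" where
  "PhiW W V t s i j = matprod W V s (t - s) i j"

definition stochastic_vec :: "nat set \<Rightarrow> (nat \<Rightarrow> real) \<Rightarrow> bool" where
  "stochastic_vec V p \<longleftrightarrow> (\<forall>i\<in>V. p i \<ge> 0) \<and> (\<Sum>i\<in>V. p i) = 1"

definition is_subgradient :: "('a::real_inner \<Rightarrow> real) \<Rightarrow> 'a \<Rightarrow> 'a \<Rightarrow> bool" where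
  "is_subgradient f z g \<longleftrightarrow> (\<forall>u. f u \<ge> f z + inner g (u - z))"

end

theory Submission
  imports Defs
begin

text \<open>With \<open>u\<^sub>k(t) = x\<^sub>k(t) - \<alpha>(t) g\<^sub>k(t)\<close> the numerators satisfy the perturbed linear
recurrence \<open>u(t+1) = W(t) u(t) - \<alpha>(t+1) g(t+1)\<close>, so \<open>x(t+1)\<close> is \<open>\<Phi>\<^sub>W(t+1,0) u(0)\<close> minus
the gradient steps pushed through \<open>\<Phi>\<^sub>W(t+1,s)\<close>, and \<open>y(t+1) = \<Phi>\<^sub>W(t+1,0) \<one>\<close>.
Column stochasticity conserves \<open>\<Sum>\<^sub>k u\<^sub>k\<close>, which gives the average in closed form.
Since all entries of row \<open>i\<close> of \<open>\<Phi>\<^sub>W(t+1,s)\<close> lie within \<open>4\<mu>^(t-s)\<close> of the same number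
\<open>\<phi>\<^sub>i(t)\<close>, the numerator \<open>x\<^sub>i(t+1)\<close> and the scaled average \<open>y\<^sub>i(t+1) \<cdot> (1/n) \<Sum>\<^sub>k u\<^sub>k(t)\<close> agree up to
\<open>8\<mu>^(t-s)\<close> per step; dividing by \<open>y\<^sub>i \<ge> \<eta>\<close> gives the first bound. The second follows
by splitting the geometric convolution at \<open>\<lceil>t/2\<rceil>\<close>.\<close>

definition PhiW_apply :: "(nat \<Rightarrow> nat \<Rightarrow> nat \<Rightarrow> real) \<Rightarrow> nat set \<Rightarrow> nat \<Rightarrow> nat \<Rightarrow>
    (nat \<Rightarrow> 'a::real_vector) \<Rightarrow> nat \<Rightarrow> 'a" where
  "PhiW_apply W V t s v i = (\<Sum>j\<in>V. PhiW W V t s i j *\<^sub>R v j)"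

lemma PhiW_Suc:
  "s \<le> t \<Longrightarrow> PhiW W V (Suc t) s i j = (\<Sum>l\<in>V. W t i l * PhiW W V t s l j)"
  by (simp add: PhiW_def Suc_diff_le)

lemma PhiW_apply_self:
  assumes "finite V" "i \<in> V"
  shows "PhiW_apply W V s s v i = v i"
proof -
  have "PhiW_apply W V s s v i = (\<Sum>j\<in>V. if i = j then v j else 0)"
    unfolding PhiW_apply_def by (intro sum.cong) (simp_all add: PhiW_def)
  then show ?thesis using assms by simp
qed

lemma PhiW_apply_Suc:
  assumes "finite V" "s \<le> t"
  shows "(\<Sum>l\<in>V. W t i l *\<^sub>R PhiW_apply W V t s v l) = PhiW_apply W V (Suc t) s v i"
proof -
  have "(\<Sum>l\<in>V. W t i l *\<^sub>R PhiW_apply W V t s v l)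
      = (\<Sum>j\<in>V. \<Sum>l\<in>V. (W t i l * PhiW W V t s l j) *\<^sub>R v j)"
    unfolding PhiW_apply_def scaleR_sum_right by (subst sum.swap) simp
  also have "\<dots> = PhiW_apply W V (Suc t) s v i"
    using assms(2) by (simp add: PhiW_apply_def PhiW_Suc scaleR_sum_left)
  finally show ?thesis .
qed

lemma PhiW_apply_perturbed_recurrence:
  fixes u e :: "nat \<Rightarrow> nat \<Rightarrow> 'a::real_vector"
  assumes "finite V"
    and rec: "\<And>t i. i \<in> V \<Longrightarrow> u (Suc t) i = (\<Sum>j\<in>V. W t i j *\<^sub>R u t j) - e (Suc t) i"
    and "i \<in> V"
  shows "u t i = PhiW_apply W V t 0 (u 0) i - (\<Sum>s\<in>{1..t}. PhiW_apply W V t s (e s) i)"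
  using \<open>i \<in> V\<close>
proof (induction t arbitrary: i)
  case 0
  show ?case using PhiW_apply_self[OF \<open>finite V\<close> 0, of W 0 "u 0"] by simp
next
  case (Suc t)
  have "(\<Sum>l\<in>V. W t i l *\<^sub>R u t l)
      = (\<Sum>l\<in>V. W t i l *\<^sub>R PhiW_apply W V t 0 (u 0) l)
        - (\<Sum>s\<in>{1..t}. \<Sum>l\<in>V. W t i l *\<^sub>R PhiW_apply W V t s (e s) l)"
    using Suc.IH by (simp add: scaleR_diff_right sum_subtractf scaleR_sum_right sum.swap[of _ V])
  also have "\<dots> = PhiW_apply W V (Suc t) 0 (u 0) i
        - (\<Sum>s\<in>{1..t}. PhiW_apply W V (Suc t) s (e s) i)"
    by (intro arg_cong2[where f = "(-)"] sum.cong refl PhiW_apply_Suc[OF \<open>finite V\<close>]) auto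
  finally show ?case
    using rec[OF Suc.prems] PhiW_apply_self[OF \<open>finite V\<close> Suc.prems, of W "Suc t" "e (Suc t)"]
    by simp
qed

lemma PhiW_apply_perturbed_recurrence_Suc:
  fixes u e :: "nat \<Rightarrow> nat \<Rightarrow> 'a::real_vector"
  assumes "finite V"
    and rec: "\<And>t i. i \<in> V \<Longrightarrow> u (Suc t) i = (\<Sum>j\<in>V. W t i j *\<^sub>R u t j) - e (Suc t) i"
    and "i \<in> V"
  shows "(\<Sum>j\<in>V. W t i j *\<^sub>R u t j)
    = PhiW_apply W V (Suc t) 0 (u 0) i - (\<Sum>s\<in>{1..t}. PhiW_apply W V (Suc t) s (e s) i)"
  using PhiW_apply_perturbed_recurrence[of V u W e i "Suc t", OF assms] rec[OF \<open>i \<in> V\<close>, of t]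
    PhiW_apply_self[OF \<open>finite V\<close> \<open>i \<in> V\<close>, of W "Suc t" "e (Suc t)"]
  by (simp add: algebra_simps)

lemma sum_perturbed_recurrence:
  fixes u e :: "nat \<Rightarrow> nat \<Rightarrow> 'a::real_vector"
  assumes "finite V"
    and colsum: "\<And>t j. j \<in> V \<Longrightarrow> (\<Sum>i\<in>V. W t i j) = 1"
    and rec: "\<And>t i. i \<in> V \<Longrightarrow> u (Suc t) i = (\<Sum>j\<in>V. W t i j *\<^sub>R u t j) - e (Suc t) i"
  shows "(\<Sum>i\<in>V. u t i) = (\<Sum>i\<in>V. u 0 i) - (\<Sum>s\<in>{1..t}. \<Sum>i\<in>V. e s i)"
proof (induction t)
  case 0
  then show ?case by simp
next
  case (Suc t)
  have "(\<Sum>i\<in>V. \<Sum>j\<in>V. W t i j *\<^sub>R u t j) = (\<Sum>j\<in>V. u t j)"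
    by (subst sum.swap) (simp add: scaleR_sum_left[symmetric] colsum)
  then show ?case
    using Suc.IH by (simp add: rec sum_subtractf)
qed

lemma norm_sum_scaleR_le:
  fixes v :: "nat \<Rightarrow> 'a::real_normed_vector"
  assumes "\<And>j. j \<in> V \<Longrightarrow> \<bar>p j\<bar> \<le> K"
  shows "norm (\<Sum>j\<in>V. p j *\<^sub>R v j) \<le> K * (\<Sum>j\<in>V. norm (v j))"
proof -
  have "norm (\<Sum>j\<in>V. p j *\<^sub>R v j) \<le> (\<Sum>j\<in>V. \<bar>p j\<bar> * norm (v j))"
    using norm_sum[of "\<lambda>j. p j *\<^sub>R v j" V] by simp
  also have "\<dots> \<le> (\<Sum>j\<in>V. K * norm (v j))"
    using assms by (intro sum_mono mult_right_mono) auto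
  finally show ?thesis by (simp add: sum_distrib_left)
qed

lemma norm_double_sum_scaleR_le:
  fixes e :: "nat \<Rightarrow> nat \<Rightarrow> 'a::real_normed_vector"
  assumes "card V = n"
    and p_bound: "\<And>s j. s \<in> S \<Longrightarrow> j \<in> V \<Longrightarrow> \<bar>p s j\<bar> \<le> K s"
    and e_bound: "\<And>s j. j \<in> V \<Longrightarrow> norm (e s j) \<le> b s"
    and K_nonneg: "\<And>s. 0 \<le> K s"
  shows "norm (\<Sum>s\<in>S. \<Sum>j\<in>V. p s j *\<^sub>R e s j) \<le> real n * (\<Sum>s\<in>S. K s * b s)"
proof -
  have "norm (\<Sum>j\<in>V. p s j *\<^sub>R e s j) \<le> K s * (real n * b s)" if "s \<in> S" for s
  proof -
    have "norm (\<Sum>j\<in>V. p s j *\<^sub>R e s j) \<le> K s * (\<Sum>j\<in>V. norm (e s j))"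
      using p_bound[OF that] by (rule norm_sum_scaleR_le)
    also have "\<dots> \<le> K s * (real n * b s)"
      using sum_bounded_above[of V "\<lambda>j. norm (e s j)" "b s"] e_bound \<open>card V = n\<close> K_nonneg
      by (intro mult_left_mono) auto
    finally show ?thesis .
  qed
  then have "norm (\<Sum>s\<in>S. \<Sum>j\<in>V. p s j *\<^sub>R e s j) \<le> (\<Sum>s\<in>S. K s * (real n * b s))"
    by (blast intro: order_trans[OF norm_sum sum_mono])
  then show ?thesis by (simp add: sum_distrib_left mult_ac)
qed

lemma norm_mixed_sum_minus_average_le:
  fixes v :: "nat \<Rightarrow> 'a::real_normed_vector" and e :: "nat \<Rightarrow> nat \<Rightarrow> 'a"
  assumes "card V = n" "n > 0" and \<mu>: "0 \<le> \<mu>" "\<mu> \<le> 1"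
    and P_close: "\<And>s j. s \<le> t \<Longrightarrow> j \<in> V \<Longrightarrow> \<bar>P s j - c\<bar> \<le> 4 * \<mu> ^ (t - s)"
    and e_bound: "\<And>s j. j \<in> V \<Longrightarrow> norm (e s j) \<le> b s"
  defines "X \<equiv> (\<Sum>j\<in>V. P 0 j *\<^sub>R v j) - (\<Sum>s\<in>{1..t}. \<Sum>j\<in>V. P s j *\<^sub>R e s j)"
    and "avg \<equiv> (1 / real n) *\<^sub>R ((\<Sum>j\<in>V. v j) - (\<Sum>s\<in>{1..t}. \<Sum>j\<in>V. e s j))"
  shows "norm (X - (\<Sum>j\<in>V. P 0 j) *\<^sub>R avg)
    \<le> 8 * \<mu> ^ t * (\<Sum>j\<in>V. norm (v j)) + 8 * real n * (\<Sum>s\<in>{1..t}. \<mu> ^ (t - s) * b s)"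
proof -
  have "V \<noteq> {}" using assms(1,2) by auto
  then have b_nonneg: "0 \<le> b s" for s using e_bound norm_ge_zero order_trans by blast
  define A where "A = (\<Sum>j\<in>V. norm (v j))"
  define B where "B = (\<Sum>s\<in>{1..t}. \<mu> ^ (t - s) * b s)"
  define Y where "Y = (\<Sum>j\<in>V. P 0 j)"
  define T1 where "T1 = (\<Sum>j\<in>V. (P 0 j - c) *\<^sub>R v j)"
  define T2 where "T2 = (\<Sum>s\<in>{1..t}. \<Sum>j\<in>V. (P s j - c) *\<^sub>R e s j)"
  have n_avg: "real n *\<^sub>R avg = (\<Sum>j\<in>V. v j) - (\<Sum>s\<in>{1..t}. \<Sum>j\<in>V. e s j)"
    using \<open>n > 0\<close> by (simp add: avg_def)
  \<comment> \<open>Subtracting \<open>c\<close> times the conserved total leaves only the deviations \<open>P s j - c\<close>.\<close>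
  have "T1 - T2 = X - c *\<^sub>R (real n *\<^sub>R avg)"
    unfolding n_avg T1_def T2_def X_def
    by (simp add: scaleR_diff_left sum_subtractf scaleR_diff_right scaleR_sum_right algebra_simps)
  then have split: "X - Y *\<^sub>R avg = T1 - T2 + (real n * c - Y) *\<^sub>R avg"
    by (simp add: algebra_simps)
  have T1_le: "norm T1 \<le> 4 * \<mu> ^ t * A"
    unfolding T1_def A_def using P_close[of 0] by (intro norm_sum_scaleR_le) simp
  have T2_le: "norm T2 \<le> 4 * real n * B"
    using norm_double_sum_scaleR_le[of V n "{1..t}" "\<lambda>s j. P s j - c" "\<lambda>s. 4 * \<mu> ^ (t - s)" e b]
      assms(1) P_close e_bound \<mu>
    by (simp add: T2_def B_def sum_distrib_left mult_ac)
  have Y_close: "\<bar>real n * c - Y\<bar> \<le> real n * (4 * \<mu> ^ t)"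
    using sum_abs[of "\<lambda>j. c - P 0 j" V] sum_bounded_above[of V "\<lambda>j. \<bar>c - P 0 j\<bar>" "4 * \<mu> ^ t"]
      P_close[of 0] \<open>card V = n\<close>
    by (simp add: Y_def sum_subtractf abs_minus_commute)
  have "norm (\<Sum>s\<in>{1..t}. \<Sum>j\<in>V. e s j) \<le> real n * (\<Sum>s\<in>{1..t}. b s)"
    using norm_double_sum_scaleR_le[of V n "{1..t}" "\<lambda>_ _. 1" "\<lambda>_. 1" e b] assms(1) e_bound
    by simp
  moreover have "real n * norm avg = norm ((\<Sum>j\<in>V. v j) - (\<Sum>s\<in>{1..t}. \<Sum>j\<in>V. e s j))"
    using arg_cong[OF n_avg, of norm] by simp
  ultimately have "real n * norm avg \<le> A + real n * (\<Sum>s\<in>{1..t}. b s)"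
    using norm_triangle_ineq4[of "\<Sum>j\<in>V. v j" "\<Sum>s\<in>{1..t}. \<Sum>j\<in>V. e s j"] norm_sum[of v V]
    unfolding A_def by linarith
  moreover have "\<mu> ^ t * (\<Sum>s\<in>{1..t}. b s) \<le> B"
    unfolding B_def sum_distrib_left using \<mu> b_nonneg
    by (intro sum_mono mult_right_mono power_decreasing) auto
  ultimately have "real n * (4 * \<mu> ^ t) * norm avg \<le> 4 * \<mu> ^ t * A + 4 * real n * B"
    using \<mu> mult_left_mono[of _ _ "4 * \<mu> ^ t"] mult_left_mono[of _ _ "4 * real n"]
    by (fastforce simp: algebra_simps)
  then have last_le: "norm ((real n * c - Y) *\<^sub>R avg) \<le> 4 * \<mu> ^ t * A + 4 * real n * B"
    using mult_right_mono[OF Y_close norm_ge_zero[of avg]] by simp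
  have "norm (X - Y *\<^sub>R avg) \<le> norm T1 + norm T2 + norm ((real n * c - Y) *\<^sub>R avg)"
    unfolding split by (metis norm_triangle_ineq norm_triangle_ineq4 add_right_mono order_trans)
  then show ?thesis
    using T1_le T2_le last_le by (simp add: Y_def A_def B_def)
qed

lemma norm_divide_minus_le:
  fixes X v :: "'a::real_normed_vector"
  assumes "0 < \<eta>" "\<eta> \<le> Y" "norm (X - Y *\<^sub>R v) \<le> B"
  shows "norm ((1 / Y) *\<^sub>R X - v) \<le> B / \<eta>"
proof -
  have "(1 / Y) *\<^sub>R X - v = (1 / Y) *\<^sub>R (X - Y *\<^sub>R v)"
    using assms by (simp add: scaleR_diff_right)
  then have "norm ((1 / Y) *\<^sub>R X - v) = norm (X - Y *\<^sub>R v) / Y"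
    using assms by simp
  also have "\<dots> \<le> B / \<eta>"
    using assms by (meson frac_le norm_ge_zero order_trans)
  finally show ?thesis .
qed

lemma sum_power_diff_le:
  fixes \<mu> :: real
  assumes "0 \<le> \<mu>" "\<mu> < 1" "b \<le> Suc t"
  shows "(\<Sum>s\<in>{a..<b}. \<mu> ^ (t - s)) \<le> \<mu> ^ (Suc t - b) / (1 - \<mu>)"
  using \<open>b \<le> Suc t\<close>
proof (induction b)
  case 0
  then show ?case using assms by simp
next
  case (Suc b)
  show ?case
  proof (cases "a \<le> b")
    case True
    have "(\<Sum>s\<in>{a..<Suc b}. \<mu> ^ (t - s)) \<le> \<mu> ^ Suc (t - b) / (1 - \<mu>) + \<mu> ^ (t - b)"
      using Suc True by (simp add: Suc_diff_le)
    also have "\<dots> = \<mu> ^ (t - b) / (1 - \<mu>)"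
      using assms by (simp add: field_simps)
    finally show ?thesis by simp
  next
    case False
    then show ?thesis using assms by simp
  qed
qed

lemma sum_power_diff_decseq_le:
  fixes \<mu> :: real and \<alpha> :: "nat \<Rightarrow> real"
  assumes \<mu>: "0 \<le> \<mu>" "\<mu> < 1" and "decseq \<alpha>" "\<And>s. 0 \<le> \<alpha> s" and "b \<le> Suc t"
  shows "(\<Sum>s\<in>{a..<b}. \<mu> ^ (t - s) * \<alpha> s) \<le> \<alpha> a * \<mu> ^ (Suc t - b) / (1 - \<mu>)"
proof -
  have "(\<Sum>s\<in>{a..<b}. \<mu> ^ (t - s) * \<alpha> s) \<le> (\<Sum>s\<in>{a..<b}. \<mu> ^ (t - s)) * \<alpha> a"
    unfolding sum_distrib_right using \<open>decseq \<alpha>\<close> \<mu>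
    by (intro sum_mono mult_left_mono) (auto simp: decseq_def)
  also have "\<dots> \<le> \<mu> ^ (Suc t - b) / (1 - \<mu>) * \<alpha> a"
    using sum_power_diff_le[OF \<mu> \<open>b \<le> Suc t\<close>] assms(4) by (rule mult_right_mono)
  finally show ?thesis by (simp add: mult.commute)
qed

lemma sum_power_diff_decseq_split_le:
  fixes \<mu> :: real and \<alpha> :: "nat \<Rightarrow> real"
  assumes \<mu>: "0 < \<mu>" "\<mu> < 1" and "decseq \<alpha>" and \<alpha>_pos: "\<And>t. \<alpha> t > 0"
  shows "(\<Sum>s\<in>{1..t}. \<mu> ^ (t - s) * \<alpha> s)
     \<le> 1 / (1 - \<mu>) * (\<alpha> 0 * \<mu> powr (real t / 2) + \<alpha> (nat \<lceil>real t / 2\<rceil>))"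
proof -
  define m where "m = nat \<lceil>real t / 2\<rceil>"
  have "m \<le> Suc t" and "real t / 2 \<le> real (Suc t - m)"
    unfolding m_def by linarith+
  then have "\<mu> ^ (Suc t - m) \<le> \<mu> powr (real t / 2)"
    using \<mu> by (simp add: powr_realpow[symmetric] powr_mono')
  moreover have "\<alpha> 1 \<le> \<alpha> 0"
    using \<open>decseq \<alpha>\<close> by (simp add: decseq_def)
  ultimately have head: "(\<Sum>s\<in>{1..<m}. \<mu> ^ (t - s) * \<alpha> s) \<le> \<alpha> 0 * \<mu> powr (real t / 2) / (1 - \<mu>)"
    using sum_power_diff_decseq_le[of \<mu> \<alpha> m t 1] \<mu> \<open>decseq \<alpha>\<close> \<alpha>_pos \<open>m \<le> Suc t\<close>
    by (smt (verit, best) divide_right_mono mult_mono zero_le_power)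
  have tail: "(\<Sum>s\<in>{m..<Suc t}. \<mu> ^ (t - s) * \<alpha> s) \<le> \<alpha> m / (1 - \<mu>)"
    using sum_power_diff_decseq_le[of \<mu> \<alpha> "Suc t" t m] \<mu> \<open>decseq \<alpha>\<close> \<alpha>_pos
    by (simp add: less_imp_le)
  have "(\<Sum>s\<in>{1..t}. \<mu> ^ (t - s) * \<alpha> s)
      \<le> (\<Sum>s\<in>{1..<m} \<union> {m..<Suc t}. \<mu> ^ (t - s) * \<alpha> s)"
    using \<mu> \<alpha>_pos by (intro sum_mono2) (auto simp: less_imp_le)
  also have "\<dots> = (\<Sum>s\<in>{1..<m}. \<mu> ^ (t - s) * \<alpha> s) + (\<Sum>s\<in>{m..<Suc t}. \<mu> ^ (t - s) * \<alpha> s)"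
    by (intro sum.union_disjoint) auto
  finally show ?thesis
    using head tail by (simp add: m_def add_divide_distrib)
qed

lemma sum_in_nbrs_eq_sum:
  fixes v :: "nat \<Rightarrow> 'a::real_vector"
  assumes "finite V" "E t \<subseteq> V \<times> V" "\<And>j. j \<notin> in_nbrs E t i \<Longrightarrow> w t i j = 0"
  shows "(\<Sum>j\<in>in_nbrs E t i. w t i j *\<^sub>R v j) = (\<Sum>j\<in>V. w t i j *\<^sub>R v j)"
  by (rule sum.mono_neutral_left) (use assms in \<open>auto simp: in_nbrs_def\<close>)

lemma sum_out_nbrs_eq_sum:
  assumes "finite V" "E t \<subseteq> V \<times> V" "\<And>i j. j \<notin> in_nbrs E t i \<Longrightarrow> w t i j = 0"
  shows "(\<Sum>i\<in>out_nbrs E t j. w t i j) = (\<Sum>i\<in>V. w t i j)"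
  by (rule sum.mono_neutral_left) (use assms in \<open>auto simp: in_nbrs_def out_nbrs_def\<close>)

lemma subgradient_push_consensus_error:
  fixes w :: "nat \<Rightarrow> nat \<Rightarrow> nat \<Rightarrow> real" and \<alpha> :: "nat \<Rightarrow> real"
    and x z g :: "nat \<Rightarrow> nat \<Rightarrow> 'a::real_normed_vector" and y :: "nat \<Rightarrow> nat \<Rightarrow> real"
  assumes "finite V" "card V = n" "i \<in> V"
    and graph: "\<And>t. E t \<subseteq> V \<times> V"
    and w_zero: "\<And>t i j. j \<notin> in_nbrs E t i \<Longrightarrow> w t i j = 0"
    and w_colsum: "\<And>t i. i \<in> V \<Longrightarrow> (\<Sum>j\<in>out_nbrs E t i. w t j i) = 1"
    and alpha_nonneg: "\<And>t. 0 \<le> \<alpha> t"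
    and x_step: "\<And>t i. i \<in> V \<Longrightarrow>
        x (Suc t) i = (\<Sum>j\<in>in_nbrs E t i. w t i j *\<^sub>R (x t j - \<alpha> t *\<^sub>R g t j))"
    and y_init: "\<And>i. i \<in> V \<Longrightarrow> y 0 i = 1"
    and y_step: "\<And>t i. i \<in> V \<Longrightarrow> y (Suc t) i = (\<Sum>j\<in>in_nbrs E t i. w t i j * y t j)"
    and z_def: "\<And>t i. i \<in> V \<Longrightarrow> z t i = (1 / y t i) *\<^sub>R x t i"
    and g_bound: "\<And>t i. i \<in> V \<Longrightarrow> norm (g t i) \<le> G"
    and "0 < \<eta>" and eta_bound: "\<And>t i. i \<in> V \<Longrightarrow> \<eta> \<le> y t i"
    and \<mu>: "0 \<le> \<mu>" "\<mu> \<le> 1"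
    and mix: "\<And>s j. s \<le> t \<Longrightarrow> j \<in> V \<Longrightarrow> \<bar>PhiW w V (Suc t) s i j - c\<bar> \<le> 4 * \<mu> ^ (t - s)"
  shows "norm (z (Suc t) i - (1 / real n) *\<^sub>R (\<Sum>k\<in>V. x t k - \<alpha> t *\<^sub>R g t k))
    \<le> 8 / \<eta> * \<mu> ^ t * (\<Sum>k\<in>V. norm (x 0 k - \<alpha> 0 *\<^sub>R g 0 k))
      + 8 * real n * G / \<eta> * (\<Sum>s\<in>{1..t}. \<mu> ^ (t - s) * \<alpha> s)"
proof -
  define u where "u t j = x t j - \<alpha> t *\<^sub>R g t j" for t j
  define e where "e t j = \<alpha> t *\<^sub>R g t j" for t j
  have x_eq: "x (Suc t) i = (\<Sum>j\<in>V. w t i j *\<^sub>R u t j)" if "i \<in> V" for t i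
    using x_step[OF that] sum_in_nbrs_eq_sum[OF \<open>finite V\<close> graph w_zero] by (simp add: u_def)
  have u_rec: "u (Suc t) i = (\<Sum>j\<in>V. w t i j *\<^sub>R u t j) - e (Suc t) i" if "i \<in> V" for t i
    using x_eq[OF that] by (simp add: u_def e_def)
  have y_rec: "y (Suc t) i = (\<Sum>j\<in>V. w t i j *\<^sub>R y t j) - 0" if "i \<in> V" for t i
    using y_step[OF that] sum_in_nbrs_eq_sum[OF \<open>finite V\<close> graph w_zero, where v = "y t"] by simp
  have colsum: "(\<Sum>i\<in>V. w t i j) = 1" if "j \<in> V" for t j
    using w_colsum[OF that]
      sum_out_nbrs_eq_sum[where E = E and t = t and w = w, OF \<open>finite V\<close> graph w_zero]
    by metis
  have x_closed: "x (Suc t) i = (\<Sum>j\<in>V. PhiW w V (Suc t) 0 i j *\<^sub>R u 0 j)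
      - (\<Sum>s\<in>{1..t}. \<Sum>j\<in>V. PhiW w V (Suc t) s i j *\<^sub>R e s j)"
    using x_eq[OF \<open>i \<in> V\<close>]
      PhiW_apply_perturbed_recurrence_Suc[where u = u and W = w and e = e and t = t,
      OF \<open>finite V\<close> u_rec \<open>i \<in> V\<close>]
    by (simp add: PhiW_apply_def)
  have y_closed: "y (Suc t) i = (\<Sum>j\<in>V. PhiW w V (Suc t) 0 i j)"
    using y_rec[OF \<open>i \<in> V\<close>]
      PhiW_apply_perturbed_recurrence_Suc[where u = y and W = w and e = "\<lambda>_ _. 0" and t = t,
      OF \<open>finite V\<close> y_rec \<open>i \<in> V\<close>]
    by (simp add: PhiW_apply_def y_init)
  have u_total: "(\<Sum>k\<in>V. u t k) = (\<Sum>k\<in>V. u 0 k) - (\<Sum>s\<in>{1..t}. \<Sum>k\<in>V. e s k)"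
    using sum_perturbed_recurrence[where u = u and W = w and e = e, OF \<open>finite V\<close> colsum u_rec] .
  have e_bound: "norm (e s j) \<le> \<alpha> s * G" if "j \<in> V" for s j
    using g_bound[OF that] alpha_nonneg[of s] by (simp add: e_def mult_left_mono)
  have "n > 0" using \<open>finite V\<close> \<open>card V = n\<close> \<open>i \<in> V\<close> card_gt_0_iff by blast
  have "norm (x (Suc t) i - y (Suc t) i *\<^sub>R ((1 / real n) *\<^sub>R (\<Sum>k\<in>V. u t k)))
      \<le> 8 * \<mu> ^ t * (\<Sum>j\<in>V. norm (u 0 j)) + 8 * real n * (\<Sum>s\<in>{1..t}. \<mu> ^ (t - s) * (\<alpha> s * G))"
    unfolding x_closed y_closed u_total
    by (rule norm_mixed_sum_minus_average_le[where P = "\<lambda>s j. PhiW w V (Suc t) s i j" and c = c,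
          OF \<open>card V = n\<close> \<open>n > 0\<close> \<mu> mix e_bound])
  then have "norm (z (Suc t) i - (1 / real n) *\<^sub>R (\<Sum>k\<in>V. u t k))
      \<le> (8 * \<mu> ^ t * (\<Sum>j\<in>V. norm (u 0 j)) + 8 * real n * (\<Sum>s\<in>{1..t}. \<mu> ^ (t - s) * (\<alpha> s * G))) / \<eta>"
    unfolding z_def[OF \<open>i \<in> V\<close>]
    by (rule norm_divide_minus_le[OF \<open>0 < \<eta>\<close> eta_bound[OF \<open>i \<in> V\<close>]])
  then show ?thesis
    by (simp add: u_def sum_distrib_left sum_divide_distrib mult_ac add_divide_distrib)
qed

theorem lemma8:
  fixes n L :: nat
    and E :: "nat \<Rightarrow> (nat \<times> nat) set"
    and w :: "nat \<Rightarrow> nat \<Rightarrow> nat \<Rightarrow> real"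
    and \<beta> :: real
    and f :: "nat \<Rightarrow> 'a::euclidean_space \<Rightarrow> real"
    and \<alpha> :: "nat \<Rightarrow> real"
    and x z g :: "nat \<Rightarrow> nat \<Rightarrow> 'a"
    and y :: "nat \<Rightarrow> nat \<Rightarrow> real"
    and G \<eta> \<mu> :: real
  defines "V \<equiv> agents n"
  assumes graph: "\<And>t. E t \<subseteq> V \<times> V"
    and selfloops: "\<And>t i. i \<in> V \<Longrightarrow> (i, i) \<in> E t"
    and beta_pos: "\<beta> > 0"
    and w_pos: "\<And>t i j. j \<in> in_nbrs E t i \<Longrightarrow> w t i j \<ge> \<beta>"
    and w_zero: "\<And>t i j. j \<notin> in_nbrs E t i \<Longrightarrow> w t i j = 0"
    and w_colsum: "\<And>t i. i \<in> V \<Longrightarrow> (\<Sum>j\<in>out_nbrs E t i. w t j i) = 1"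
    and usc: "uniformly_strongly_connected V L E"
    and convex: "\<And>i. i \<in> V \<Longrightarrow> convex_on UNIV (f i)"
    and alpha_pos: "\<And>t. \<alpha> t > 0"
    and x_step: "\<And>t i. i \<in> V \<Longrightarrow>
        x (Suc t) i = (\<Sum>j\<in>in_nbrs E t i. w t i j *\<^sub>R (x t j - \<alpha> t *\<^sub>R g t j))"
    and y_init: "\<And>i. i \<in> V \<Longrightarrow> y 0 i = 1"
    and y_step: "\<And>t i. i \<in> V \<Longrightarrow> y (Suc t) i = (\<Sum>j\<in>in_nbrs E t i. w t i j * y t j)"
    and z_def: "\<And>t i. i \<in> V \<Longrightarrow> z t i = (1 / y t i) *\<^sub>R x t i"
    and subgrad: "\<And>t i. i \<in> V \<Longrightarrow> is_subgradient (f i) (z t i) (g t i)"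
    and G_pos: "G > 0"
    and g_bound: "\<And>t i. i \<in> V \<Longrightarrow> norm (g t i) \<le> G"
    and eta_pos: "\<eta> > 0"
    and eta_bound: "\<And>t i. i \<in> V \<Longrightarrow> y t i \<ge> \<eta>"
    and mu_range: "0 < \<mu>" "\<mu> < 1"
    and mu_mix: "\<exists>\<phi>::nat \<Rightarrow> nat \<Rightarrow> real. \<forall>t. stochastic_vec V (\<phi> t) \<and>
        (\<forall>s\<le>t. \<forall>i\<in>V. \<forall>j\<in>V. \<bar>PhiW w V (t + 1) s i j - \<phi> t i\<bar> \<le> 4 * \<mu> ^ (t - s))"
  shows "(\<forall>t. \<forall>i\<in>V.
            norm (z (t + 1) i - (1 / real n) *\<^sub>R (\<Sum>k\<in>V. x t k - \<alpha> t *\<^sub>R g t k))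
            \<le> 8 / \<eta> * \<mu> ^ t * (\<Sum>k\<in>V. norm (x 0 k - \<alpha> 0 *\<^sub>R g 0 k))
              + 8 * real n * G / \<eta> * (\<Sum>s\<in>{1..t}. \<mu> ^ (t - s) * \<alpha> s))
       \<and> ((decseq \<alpha> \<and> filterlim (\<lambda>T. \<Sum>t<T. \<alpha> t) at_top sequentially
            \<and> summable (\<lambda>t. (\<alpha> t)\<^sup>2)) \<longrightarrow>
          (\<forall>t. \<forall>i\<in>V.
            norm (z (t + 1) i - (1 / real n) *\<^sub>R (\<Sum>k\<in>V. x t k - \<alpha> t *\<^sub>R g t k))
            \<le> 8 / \<eta> * \<mu> ^ t * (\<Sum>k\<in>V. norm (x 0 k - \<alpha> 0 *\<^sub>R g 0 k))
              + 8 * real n * G / (\<eta> * (1 - \<mu>))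
                * (\<alpha> 0 * \<mu> powr (real t / 2) + \<alpha> (nat \<lceil>real t / 2\<rceil>))))"
proof -
  \<comment> \<open>Connectivity, the weight bound \<open>\<beta>\<close>, convexity and the subgradient property only
    serve to guarantee that \<open>\<eta>\<close> and \<open>\<mu>\<close> exist; here they are assumed directly.\<close>
  have "finite V" and "card V = n" by (simp_all add: V_def agents_def)
  obtain \<phi> :: "nat \<Rightarrow> nat \<Rightarrow> real" where
    \<phi>: "\<And>t s i j. s \<le> t \<Longrightarrow> i \<in> V \<Longrightarrow> j \<in> V \<Longrightarrow>
      \<bar>PhiW w V (Suc t) s i j - \<phi> t i\<bar> \<le> 4 * \<mu> ^ (t - s)"
    using mu_mix by (metis Suc_eq_plus1)
  have bound: "norm (z (t + 1) i - (1 / real n) *\<^sub>R (\<Sum>k\<in>V. x t k - \<alpha> t *\<^sub>R g t k))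
      \<le> 8 / \<eta> * \<mu> ^ t * (\<Sum>k\<in>V. norm (x 0 k - \<alpha> 0 *\<^sub>R g 0 k))
        + 8 * real n * G / \<eta> * (\<Sum>s\<in>{1..t}. \<mu> ^ (t - s) * \<alpha> s)" if "i \<in> V" for t i
    using subgradient_push_consensus_error[OF \<open>finite V\<close> \<open>card V = n\<close> that graph w_zero w_colsum
        less_imp_le[OF alpha_pos] x_step y_init y_step z_def g_bound eta_pos eta_bound
        less_imp_le[OF mu_range(1)] less_imp_le[OF mu_range(2)] \<phi>[OF _ that]]
    by simp
  moreover have "8 * real n * G / \<eta> * (\<Sum>s\<in>{1..t}. \<mu> ^ (t - s) * \<alpha> s)
      \<le> 8 * real n * G / (\<eta> * (1 - \<mu>)) * (\<alpha> 0 * \<mu> powr (real t / 2) + \<alpha> (nat \<lceil>real t / 2\<rceil>))"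
    if "decseq \<alpha>" for t
    using mult_left_mono[OF sum_power_diff_decseq_split_le[OF mu_range that alpha_pos, of t],
        of "8 * real n * G / \<eta>"] G_pos eta_pos
    by simp
  ultimately show ?thesis by (meson order_trans add_left_mono)
qed

end
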